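(* Let $G$ be a digraph with a fixed upward planar drawing and let $\mathcal{P}$ be a set of pairwise vertex disjoint directed paths in $G$. Then $\prec^*_{\mathcal{P}}$ is a partial order on $\mathcal{P}$.
   Context: An upward planar drawing of a digraph is a plane drawing (no edge crossings) in which every directed edge is a curve monotone increasing in the $y$-direction from tail to head. A path is identified with the set of points of $\mathbb{R}^2$ in its drawing. For a path $P$ with endpoints $(x,y)$, $(x',y')$, $y\le y'$, let $\mathrm{Right}(P):=\{(u,v)\in\mathbb{R}^2: y\le v\le y',\ u'<u \text{ for all } u' \text{ with } (u',v)\in P\}$. A point $p\notin P$ is to the right of $P$ if $p\in\mathrm{Right}(P)$. For vertex disjoint paths $P,Q$, write $Q\prec P$ if some point of $P$ is to the right of $Q$. $\prec^*$ is the transitive closure of $\prec$, and $\prec^*_{\mathcal{P}}$ is the transitive closure of $\prec$ restricted to the paths in $\mathcal{P}$. *)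

theory Defs
  imports "HOL-Analysis.Analysis"
begin

type_synonym point = "real \<times> real"

definition upward_planar_drawing ::
  "'v set \<Rightarrow> ('v \<times> 'v) set \<Rightarrow> ('v \<Rightarrow> point) \<Rightarrow> ('v \<times> 'v \<Rightarrow> real \<Rightarrow> point) \<Rightarrow> bool" where
  "upward_planar_drawing V E pos crv \<longleftrightarrow>
     finite V \<and> E \<subseteq> V \<times> V \<and> inj_on pos V \<and>
     (\<forall>e\<in>E. path (crv e) \<and> pathstart (crv e) = pos (fst e) \<and> pathfinish (crv e) = pos (snd e)
        \<and> strict_mono_on {0..1} (\<lambda>t. snd (crv e t))) \<and>
     \<comment> \<open>no vertex lies on an edge other than at its endpoints\<close>
     (\<forall>e\<in>E. \<forall>v\<in>V. pos v \<in> path_image (crv e) \<longrightarrow> v = fst e \<or> v = snd e) \<and>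
     \<comment> \<open>no crossings: distinct edges meet only in common end vertices\<close>
     (\<forall>e\<in>E. \<forall>e'\<in>E. e \<noteq> e' \<longrightarrow>
        path_image (crv e) \<inter> path_image (crv e') \<subseteq>
          pos ` ({fst e, snd e} \<inter> {fst e', snd e'}))"

definition dir_path :: "'v set \<Rightarrow> ('v \<times> 'v) set \<Rightarrow> 'v list \<Rightarrow> bool" where
  "dir_path V E P \<longleftrightarrow> P \<noteq> [] \<and> distinct P \<and> set P \<subseteq> V \<and>
     (\<forall>i. Suc i < length P \<longrightarrow> (P ! i, P ! Suc i) \<in> E)"

definition path_points :: "('v \<Rightarrow> point) \<Rightarrow> ('v \<times> 'v \<Rightarrow> real \<Rightarrow> point) \<Rightarrow> 'v list \<Rightarrow> point set" where
  "path_points pos crv P =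
     pos ` set P \<union> (\<Union>i\<in>{i. Suc i < length P}. path_image (crv (P ! i, P ! Suc i)))"

definition Right_of :: "('v \<Rightarrow> point) \<Rightarrow> ('v \<times> 'v \<Rightarrow> real \<Rightarrow> point) \<Rightarrow> 'v list \<Rightarrow> point set" where
  "Right_of pos crv P =
     (let y1 = snd (pos (hd P)); y2 = snd (pos (last P)) in
      {(u, v). min y1 y2 \<le> v \<and> v \<le> max y1 y2 \<and>
               (\<forall>u'. (u', v) \<in> path_points pos crv P \<longrightarrow> u' < u)})"

definition right_of :: "('v \<Rightarrow> point) \<Rightarrow> ('v \<times> 'v \<Rightarrow> real \<Rightarrow> point) \<Rightarrow> point \<Rightarrow> 'v list \<Rightarrow> bool" where
  "right_of pos crv p P \<longleftrightarrow> p \<notin> path_points pos crv P \<and> p \<in> Right_of pos crv P"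

definition prec :: "('v \<Rightarrow> point) \<Rightarrow> ('v \<times> 'v \<Rightarrow> real \<Rightarrow> point) \<Rightarrow> 'v list \<Rightarrow> 'v list \<Rightarrow> bool" where
  "prec pos crv Q P \<longleftrightarrow> set Q \<inter> set P = {} \<and>
     (\<exists>p\<in>path_points pos crv P. right_of pos crv p Q)"

definition prec_star_on :: "('v \<Rightarrow> point) \<Rightarrow> ('v \<times> 'v \<Rightarrow> real \<Rightarrow> point) \<Rightarrow> 'v list set \<Rightarrow> ('v list \<times> 'v list) set" where
  "prec_star_on pos crv \<P> = {(Q, P). Q \<in> \<P> \<and> P \<in> \<P> \<and> prec pos crv Q P}\<^sup>+"

end

theory Submission
  imports Defs
begin

text \<open>The drawing of a directed path is the graph \<open>x = g\<^sub>P y\<close> of a continuous function over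
  the height interval of the path, and vertex disjoint paths have disjoint drawings. Hence
  \<open>Q \<prec> P\<close> means \<open>g\<^sub>Q < g\<^sub>P\<close> at some common height, and by the intermediate value theorem
  then at every common height. In a cycle of \<open>\<prec>\<close>, let \<open>m\<close> be the path with the lowest top; that
  height lies in the intervals of its predecessor \<open>z\<close> and successor \<open>b\<close>, where
  \<open>g\<^sub>z < g\<^sub>m < g\<^sub>b\<close>. So \<open>z \<prec> b\<close>, and \<open>m\<close> can be cut out of the cycle; a cycle of length one
  contradicts irreflexivity.\<close>

definition rel_cycle :: "('a \<Rightarrow> 'a \<Rightarrow> bool) \<Rightarrow> 'a list \<Rightarrow> bool" where
  "rel_cycle R xs \<longleftrightarrow> xs \<noteq> [] \<and> successively R (xs @ [hd xs])"

lemma rel_cycle_rotate1: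
  assumes "rel_cycle R xs"
  shows "rel_cycle R (rotate1 xs)"
proof (cases xs)
  case Nil
  then show ?thesis using assms by (simp add: rel_cycle_def)
next
  case (Cons a ys)
  with assms show ?thesis
    using successively_append_iff[of R "tl xs @ [a]" "[hd (tl xs)]"]
    by (cases ys) (auto simp: rel_cycle_def successively_append_iff)
qed

lemma rel_cycle_rotate: "rel_cycle R xs \<Longrightarrow> rel_cycle R (rotate n xs)"
  by (induction n) (auto intro: rel_cycle_rotate1)

lemma rel_cycle_shortcut:
  assumes "rel_cycle R (m # ys)" and "ys \<noteq> []" and "R (last ys) (hd ys)"
  shows "rel_cycle R ys"
proof -
  have "successively R ys"
    using assms(1) successively_append_iff[of R "m # ys" "[m]"]
    by (cases ys) (simp_all add: rel_cycle_def)
  with assms(2,3) show ?thesis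
    by (simp add: rel_cycle_def successively_append_iff)
qed

lemma trancl_imp_successively:
  assumes "(a, b) \<in> {(x, y). R x y}\<^sup>+"
  shows "\<exists>xs. xs \<noteq> [] \<and> hd xs = a \<and> successively R (xs @ [b])"
  using assms
proof (induction rule: trancl_induct)
  case (base y)
  then show ?case by (intro exI[of _ "[a]"]) auto
next
  case (step y z)
  then obtain xs where "xs \<noteq> []" "hd xs = a" "successively R (xs @ [y])" by blast
  with step.hyps(2) show ?case
    by (intro exI[of _ "xs @ [y]"]) (auto simp: successively_append_iff)
qed

lemma acyclic_if_no_rel_cycle:
  assumes "\<And>xs. \<not> rel_cycle R xs"
  shows "acyclic {(x, y). R x y}"
  unfolding acyclic_def
proof (intro allI notI)
  fix a assume "(a, a) \<in> {(x, y). R x y}\<^sup>+"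
  then obtain xs where "rel_cycle R xs"
    using trancl_imp_successively[of a a R] by (auto simp: rel_cycle_def)
  with assms show False by blast
qed

locale noncrossing_graphs =
  fixes S :: "'a set" and lo hi :: "'a \<Rightarrow> real" and f :: "'a \<Rightarrow> real \<Rightarrow> real"
  assumes lo_le_hi: "A \<in> S \<Longrightarrow> lo A \<le> hi A"
    and continuous_graph: "A \<in> S \<Longrightarrow> continuous_on {lo A..hi A} (f A)"
    and noncrossing: "\<lbrakk>A \<in> S; B \<in> S; A \<noteq> B; y \<in> {lo A..hi A}; y \<in> {lo B..hi B}\<rbrakk>
                        \<Longrightarrow> f A y \<noteq> f B y"
begin

definition left_of :: "'a \<Rightarrow> 'a \<Rightarrow> bool" where
  "left_of A B \<longleftrightarrow> A \<in> S \<and> B \<in> S \<and> A \<noteq> B \<and>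
     (\<exists>y \<in> {lo A..hi A} \<inter> {lo B..hi B}. f A y < f B y)"

lemma left_of_at:
  assumes "left_of A B" and z: "z \<in> {lo A..hi A}" "z \<in> {lo B..hi B}"
  shows "f A z < f B z"
proof (rule ccontr)
  assume "\<not> f A z < f B z"
  obtain y where AB: "A \<in> S" "B \<in> S" "A \<noteq> B"
    and y: "y \<in> {lo A..hi A}" "y \<in> {lo B..hi B}" "f A y < f B y"
    using assms(1) by (auto simp: left_of_def)
  define g where "g t = f B t - f A t" for t
  have "{min y z..max y z} \<subseteq> {lo A..hi A} \<inter> {lo B..hi B}"
    using y z by auto
  then have "continuous_on {min y z..max y z} g"
    unfolding g_def using continuous_graph[OF AB(1)] continuous_graph[OF AB(2)]
    by (auto intro!: continuous_intros elim!: continuous_on_subset)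
  moreover have "g z < 0" "0 < g y"
    using \<open>\<not> f A z < f B z\<close> noncrossing[OF AB z] y(3) by (auto simp: g_def)
  ultimately obtain t where t: "min y z \<le> t" "t \<le> max y z" "g t = 0"
    using IVT'[of g z 0 y] IVT2'[of g z 0 y] by (cases "y \<le> z") (auto simp: min_def max_def)
  then have "t \<in> {lo A..hi A}" "t \<in> {lo B..hi B}" using y z by auto
  from noncrossing[OF AB this] t(3) show False by (simp add: g_def)
qed

lemma no_left_of_cycle: "\<not> rel_cycle left_of xs"
proof (induction "length xs" arbitrary: xs rule: less_induct)
  case less
  show ?case
  proof
    assume cyc: "rel_cycle left_of xs"
    define m where "m = arg_min_list hi xs"
    have "m \<in> set xs" using cyc by (auto simp: m_def rel_cycle_def arg_min_list_in)
    then obtain k where "k < length xs" "xs ! k = m" by (auto simp: in_set_conv_nth)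
    then have "hd (rotate k xs) = m" using cyc by (simp add: hd_rotate_conv_nth rel_cycle_def)
    moreover have "rotate k xs \<noteq> []" using cyc by (simp add: rel_cycle_def)
    ultimately obtain ys where ys: "rotate k xs = m # ys" by (cases "rotate k xs") auto
    have cyc_m: "rel_cycle left_of (m # ys)"
      using rel_cycle_rotate[OF cyc] ys by metis
    have ys_ne: "ys \<noteq> []"
    proof
      assume "ys = []"
      with cyc_m have "left_of m m" by (simp add: rel_cycle_def)
      then show False by (simp add: left_of_def)
    qed
    define b z where "b = hd ys" and "z = last ys"
    have mb: "left_of m b" and zm: "left_of z m"
      using cyc_m ys_ne successively_append_iff[of left_of "m # ys" "[m]"]
      by (auto simp: rel_cycle_def b_def z_def neq_Nil_conv)
    have "set ys \<subseteq> set xs" using ys by (metis set_rotate set_subset_Cons)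
    then have "b \<in> set xs" "z \<in> set xs" using ys_ne by (auto simp: b_def z_def)
    then have "hi m \<le> hi b" "hi m \<le> hi z"
      using f_arg_min_list_f[of xs hi] cyc by (auto simp: m_def rel_cycle_def)
    \<comment> \<open>the lowest top of the cycle lies in the intervals of both neighbours\<close>
    moreover have "lo m \<le> hi m" "lo b \<le> hi m" "lo z \<le> hi m"
      using mb zm lo_le_hi by (auto simp: left_of_def)
    ultimately have "f z (hi m) < f m (hi m)" "f m (hi m) < f b (hi m)"
      using left_of_at[OF zm, of "hi m"] left_of_at[OF mb, of "hi m"] by auto
    then have "f z (hi m) < f b (hi m)" by linarith
    then have "left_of z b"
      using mb zm \<open>hi m \<le> hi b\<close> \<open>hi m \<le> hi z\<close> \<open>lo b \<le> hi m\<close> \<open>lo z \<le> hi m\<close>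
      unfolding left_of_def by (intro conjI bexI[of _ "hi m"]) auto
    then have "rel_cycle left_of ys"
      using rel_cycle_shortcut[OF cyc_m ys_ne] by (simp add: b_def z_def)
    moreover have "length ys < length xs" using ys by (metis length_Cons length_rotate lessI)
    ultimately show False using less by blast
  qed
qed

lemma acyclic_left_of: "acyclic {(A, B). left_of A B}"
  by (rule acyclic_if_no_rel_cycle) (rule no_left_of_cycle)

end

definition graph_over_y :: "(real \<Rightarrow> real) \<Rightarrow> real set \<Rightarrow> point set" where
  "graph_over_y g I = (\<lambda>y. (g y, y)) ` I"

lemma mem_graph_over_y [simp]: "(u, y) \<in> graph_over_y g I \<longleftrightarrow> y \<in> I \<and> u = g y"
  by (auto simp: graph_over_y_def)

lemma graph_over_y_join:
  assumes "a \<le> b" "b \<le> c" "g1 b = g2 b"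
  shows "graph_over_y g1 {a..b} \<union> graph_over_y g2 {b..c} =
         graph_over_y (\<lambda>y. if y \<le> b then g1 y else g2 y) {a..c}"
  using assms by (auto simp: graph_over_y_def image_iff)

lemma continuous_on_join:
  fixes g1 g2 :: "real \<Rightarrow> real"
  assumes "continuous_on {a..b} g1" "continuous_on {b..c} g2" "g1 b = g2 b"
  shows "continuous_on {a..c} (\<lambda>y. if y \<le> b then g1 y else g2 y)"
proof (rule continuous_on_cases_le[where h = "\<lambda>y. y", OF _ _ continuous_on_id])
  show "continuous_on {y \<in> {a..c}. y \<le> b} g1"
    by (rule continuous_on_subset[OF assms(1)]) auto
  show "continuous_on {y \<in> {a..c}. b \<le> y} g2"
    by (rule continuous_on_subset[OF assms(2)]) auto
qed (use assms(3) in simp)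

text \<open>The height along the curve has a continuous inverse by compactness of \<open>{0..1}\<close>.\<close>
lemma upward_path_image_graph:
  fixes c :: "real \<Rightarrow> point"
  assumes "path c" and up: "strict_mono_on {0..1} (\<lambda>t. snd (c t))"
  obtains g where "continuous_on {snd (pathstart c)..snd (pathfinish c)} g"
    and "path_image c = graph_over_y g {snd (pathstart c)..snd (pathfinish c)}"
proof -
  define h where "h t = snd (c t)" for t
  have cont_c: "continuous_on {0..1} c" using \<open>path c\<close> by (simp add: path_def)
  then have cont_h: "continuous_on {0..1} h" unfolding h_def by (intro continuous_intros)
  have mono_h: "strict_mono_on {0..1} h" using up by (simp add: h_def[abs_def])
  have h_image: "h ` {0..1} = {h 0..h 1}"
  proof
    show "h ` {0..1} \<subseteq> {h 0..h 1}" using strict_mono_on_leD[OF mono_h] by auto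
    show "{h 0..h 1} \<subseteq> h ` {0..1}"
      using IVT'[of h 0 _ 1] cont_h by (force simp: image_iff)
  qed
  define k where "k = inv_into {0..1} h"
  have k_h: "k (h t) = t" if "t \<in> {0..1}" for t
    using strict_mono_on_imp_inj_on[OF mono_h] that by (simp add: k_def)
  have "continuous_on (h ` {0..1}) k"
    by (rule continuous_on_inv[OF cont_h compact_Icc]) (use k_h in blast)
  moreover have "k ` h ` {0..1} \<subseteq> {0..1}" using k_h by auto
  ultimately have "continuous_on {h 0..h 1} (\<lambda>y. fst (c (k y)))"
    using h_image by (metis continuous_on_fst continuous_on_compose2[OF cont_c])
  moreover have "path_image c = graph_over_y (\<lambda>y. fst (c (k y))) {h 0..h 1}"
    unfolding path_image_def graph_over_y_def h_image[symmetric] image_image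
  proof (rule image_cong)
    fix t :: real assume "t \<in> {0..1}"
    then show "c t = (fst (c (k (h t))), h t)" using k_h[of t] by (simp add: h_def)
  qed simp
  ultimately show ?thesis
    using that by (simp add: h_def pathstart_def pathfinish_def)
qed

lemma dir_path_Cons2:
  assumes "dir_path V E (v # w # rest)"
  shows "dir_path V E (w # rest)" and "(v, w) \<in> E"
proof -
  show "dir_path V E (w # rest)"
    using assms by (auto simp: dir_path_def)
  show "(v, w) \<in> E"
    using assms unfolding dir_path_def
    by (metis length_Cons nth_Cons_0 nth_Cons_Suc zero_less_Suc Suc_less_eq)
qed

lemma path_points_Cons2:
  assumes "pos v \<in> path_image (crv (v, w))"
  shows "path_points pos crv (v # w # rest) =
    path_image (crv (v, w)) \<union> path_points pos crv (w # rest)"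
proof -
  have "{i. Suc i < length (v # w # rest)} = insert 0 (Suc ` {i. Suc i < length (w # rest)})"
    by (auto simp: image_def gr0_conv_Suc)
  then show ?thesis using assms unfolding path_points_def by auto
qed

lemma right_of_iff_graph_over_y:
  assumes "path_points pos crv Q = graph_over_y g {snd (pos (hd Q))..snd (pos (last Q))}"
    and "snd (pos (hd Q)) \<le> snd (pos (last Q))"
  shows "right_of pos crv (u, y) Q \<longleftrightarrow> y \<in> {snd (pos (hd Q))..snd (pos (last Q))} \<and> g y < u"
  using assms by (auto simp: right_of_def Right_of_def Let_def min_def max_def)

lemma prec_iff_graph_over_y:
  assumes Q: "path_points pos crv Q = graph_over_y gQ {snd (pos (hd Q))..snd (pos (last Q))}"
      "snd (pos (hd Q)) \<le> snd (pos (last Q))"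
    and P: "path_points pos crv P = graph_over_y gP {snd (pos (hd P))..snd (pos (last P))}"
  shows "prec pos crv Q P \<longleftrightarrow> set Q \<inter> set P = {} \<and>
    (\<exists>y \<in> {snd (pos (hd Q))..snd (pos (last Q))} \<inter> {snd (pos (hd P))..snd (pos (last P))}. gQ y < gP y)"
  using right_of_iff_graph_over_y[OF Q] unfolding prec_def P graph_over_y_def by auto

context
  fixes V :: "'v set" and E pos crv
  assumes drawing: "upward_planar_drawing V E pos crv"
begin

lemma edge_curve:
  assumes "e \<in> E"
  shows "path (crv e)" "pathstart (crv e) = pos (fst e)" "pathfinish (crv e) = pos (snd e)"
    and "strict_mono_on {0..1} (\<lambda>t. snd (crv e t))"
  using drawing assms unfolding upward_planar_drawing_def by auto

lemma dir_path_points_graph: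
  assumes "dir_path V E P"
  shows "snd (pos (hd P)) \<le> snd (pos (last P)) \<and>
    (\<exists>g. continuous_on {snd (pos (hd P))..snd (pos (last P))} g \<and>
         path_points pos crv P = graph_over_y g {snd (pos (hd P))..snd (pos (last P))})"
  using assms
proof (induction P rule: induct_list012)
  case 1
  then show ?case by (simp add: dir_path_def)
next
  case (2 v)
  have "path_points pos crv [v] = graph_over_y (\<lambda>_. fst (pos v)) {snd (pos v)..snd (pos v)}"
    by (simp add: path_points_def graph_over_y_def)
  then show ?case by auto
next
  case (3 v w rest)
  let ?a = "snd (pos v)" and ?b = "snd (pos w)" and ?c = "snd (pos (last (w # rest)))"
  have edge: "(v, w) \<in> E" and "dir_path V E (w # rest)"
    using dir_path_Cons2[OF "3.prems"] by auto
  with "3.IH"(2) obtain g2 where "?b \<le> ?c" "continuous_on {?b..?c} g2"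
    and rest: "path_points pos crv (w # rest) = graph_over_y g2 {?b..?c}"
    by auto
  obtain g1 where "continuous_on {?a..?b} g1"
    and curve: "path_image (crv (v, w)) = graph_over_y g1 {?a..?b}"
    using upward_path_image_graph[OF edge_curve(1,4)[OF edge]] edge_curve(2,3)[OF edge] by auto
  have "?a < ?b"
    using edge_curve(2-4)[OF edge] strict_mono_onD[of "{0..1}" "\<lambda>t. snd (crv (v, w) t)" 0 1]
    by (simp add: pathstart_def pathfinish_def)
  have "pos w \<in> path_image (crv (v, w))" "pos w \<in> path_points pos crv (w # rest)"
    using edge_curve(3)[OF edge] pathfinish_in_path_image[of "crv (v, w)"]
    by (auto simp: path_points_def)
  then have "g1 ?b = g2 ?b" using curve rest by (auto simp: graph_over_y_def prod_eq_iff)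
  have "pos v \<in> path_image (crv (v, w))"
    using edge_curve(2)[OF edge] pathstart_in_path_image[of "crv (v, w)"] by simp
  then have "path_points pos crv (v # w # rest) =
      graph_over_y g1 {?a..?b} \<union> graph_over_y g2 {?b..?c}"
    using path_points_Cons2 curve rest by metis
  with graph_over_y_join continuous_on_join \<open>?a < ?b\<close> \<open>?b \<le> ?c\<close> \<open>g1 ?b = g2 ?b\<close>
    \<open>continuous_on {?a..?b} g1\<close> \<open>continuous_on {?b..?c} g2\<close>
  show ?case by fastforce
qed

lemma vertex_in_path_points:
  assumes "dir_path V E P" "v \<in> V" "pos v \<in> path_points pos crv P"
  shows "v \<in> set P"
  using assms(3) unfolding path_points_def
proof (elim UnE)
  assume "pos v \<in> pos ` set P"
  moreover have "inj_on pos V" "set P \<subseteq> V" using drawing assms(1)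
    by (auto simp: upward_planar_drawing_def dir_path_def)
  ultimately show ?thesis using \<open>v \<in> V\<close> by (auto dest: inj_onD)
next
  assume "pos v \<in> (\<Union>i\<in>{i. Suc i < length P}. path_image (crv (P ! i, P ! Suc i)))"
  then obtain i where i: "Suc i < length P" "pos v \<in> path_image (crv (P ! i, P ! Suc i))" by blast
  moreover have "(P ! i, P ! Suc i) \<in> E" using assms(1) i(1) by (simp add: dir_path_def)
  ultimately have "v = P ! i \<or> v = P ! Suc i"
    using drawing \<open>v \<in> V\<close> unfolding upward_planar_drawing_def by fastforce
  with i(1) show ?thesis by auto
qed

lemma path_points_disjoint:
  assumes A: "dir_path V E A" and B: "dir_path V E B" and disj: "set A \<inter> set B = {}"
  shows "path_points pos crv A \<inter> path_points pos crv B = {}"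
proof (rule ccontr)
  assume "path_points pos crv A \<inter> path_points pos crv B \<noteq> {}"
  then obtain p where pA: "p \<in> path_points pos crv A" and pB: "p \<in> path_points pos crv B" by blast
  have "p \<notin> pos ` set A"
    using vertex_in_path_points[OF B] pB disj A by (auto simp: dir_path_def)
  moreover have "p \<notin> pos ` set B"
    using vertex_in_path_points[OF A] pA disj B by (auto simp: dir_path_def)
  ultimately obtain i j where i: "Suc i < length A" "p \<in> path_image (crv (A ! i, A ! Suc i))"
    and j: "Suc j < length B" "p \<in> path_image (crv (B ! j, B ! Suc j))"
    using pA pB unfolding path_points_def by blast
  have "{A ! i, A ! Suc i} \<subseteq> set A" "{B ! j, B ! Suc j} \<subseteq> set B"
    using i(1) j(1) by auto
  with disj have "{A ! i, A ! Suc i} \<inter> {B ! j, B ! Suc j} = {}" by blast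
  moreover have "(A ! i, A ! Suc i) \<in> E" "(B ! j, B ! Suc j) \<in> E"
    using A B i(1) j(1) by (auto simp: dir_path_def)
  ultimately have "path_image (crv (A ! i, A ! Suc i)) \<inter> path_image (crv (B ! j, B ! Suc j)) = {}"
    using drawing unfolding upward_planar_drawing_def by fastforce
  with i(2) j(2) show False by blast
qed

end

theorem lemma8:
  fixes V :: "'v set" and E :: "('v \<times> 'v) set"
    and pos :: "'v \<Rightarrow> real \<times> real" and crv :: "'v \<times> 'v \<Rightarrow> real \<Rightarrow> real \<times> real"
    and \<P> :: "'v list set"
  assumes "upward_planar_drawing V E pos crv"
    and "\<forall>P\<in>\<P>. dir_path V E P"
    and "\<forall>P\<in>\<P>. \<forall>Q\<in>\<P>. P \<noteq> Q \<longrightarrow> set P \<inter> set Q = {}"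
  shows "irrefl (prec_star_on pos crv \<P>) \<and> trans (prec_star_on pos crv \<P>)"
proof
  show "trans (prec_star_on pos crv \<P>)" unfolding prec_star_on_def by (rule trans_trancl)
next
  define lo hi where "lo P = snd (pos (hd P))" and "hi P = snd (pos (last P))" for P :: "'v list"
  obtain F where F: "\<And>P. P \<in> \<P> \<Longrightarrow> lo P \<le> hi P \<and> continuous_on {lo P..hi P} (F P) \<and>
      path_points pos crv P = graph_over_y (F P) {lo P..hi P}"
    using dir_path_points_graph[OF assms(1)] assms(2) unfolding lo_def hi_def by metis
  interpret noncrossing_graphs \<P> lo hi F
  proof
    fix A B y
    assume AB: "A \<in> \<P>" "B \<in> \<P>" "A \<noteq> B" and "y \<in> {lo A..hi A}" "y \<in> {lo B..hi B}"
    then have "(F A y, y) \<in> path_points pos crv A" "(F B y, y) \<in> path_points pos crv B"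
      using F by simp_all
    moreover have "path_points pos crv A \<inter> path_points pos crv B = {}"
      using path_points_disjoint[OF assms(1)] assms(2,3) AB by blast
    ultimately show "F A y \<noteq> F B y" by auto
  qed (use F in auto)
  have "prec pos crv Q P \<longleftrightarrow> left_of Q P" if "Q \<in> \<P>" "P \<in> \<P>" for Q P
  proof -
    have "set Q \<inter> set P = {} \<longleftrightarrow> Q \<noteq> P"
      using assms(2,3) that by (auto simp: dir_path_def)
    then show ?thesis
      using prec_iff_graph_over_y[of pos crv Q] F[OF that(1)] F[OF that(2)] that
      unfolding left_of_def lo_def hi_def by auto
  qed
  then have "{(Q, P). Q \<in> \<P> \<and> P \<in> \<P> \<and> prec pos crv Q P} = {(Q, P). left_of Q P}"
    by (auto simp: left_of_def)
  with acyclic_left_of show "irrefl (prec_star_on pos crv \<P>)"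
    by (simp add: prec_star_on_def acyclic_irrefl)
qed

end
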